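(* Let $n\ge2$, $k\ge1$. For all $f\in P_{n,k}$ and all positive integers $l$, \[ \|f\|_\infty\le\binom{n+kl-1}{kl}^{\frac1{2l}}\|f\|_{2l}. \]
   Context: $P_{n,k}$: real forms of degree $k$ in $n$ variables; $\sigma$: rotation-invariant probability measure on $S^{n-1}$; $\|f\|_p=(\int_{S^{n-1}}|f|^p\,d\sigma)^{1/p}$ and $\|f\|_\infty=\max_{x\in S^{n-1}}|f(x)|$. *)

theory Defs
  imports "HOL-Probability.Probability"
begin

definition is_form :: "nat \<Rightarrow> (real^'n \<Rightarrow> real) \<Rightarrow> bool" where
  "is_form k f \<longleftrightarrow> (\<exists>c :: ('n \<Rightarrow> nat) \<Rightarrow> real.
     f = (\<lambda>x. \<Sum>\<alpha>\<in>{\<alpha>. (\<Sum>i\<in>UNIV. \<alpha> i) = k}. c \<alpha> * (\<Prod>i\<in>UNIV. (x $ i) ^ (\<alpha> i))))"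

definition rot_inv_sphere_prob :: "(real^'n) measure \<Rightarrow> bool" where
  "rot_inv_sphere_prob \<sigma> \<longleftrightarrow>
     prob_space \<sigma> \<and> space \<sigma> = sphere 0 1 \<and>
     sets \<sigma> = sets (restrict_space borel (sphere (0::real^'n) 1)) \<and>
     (\<forall>T. orthogonal_transformation T \<and> det (matrix T) = 1 \<longrightarrow>
        (\<forall>A\<in>sets \<sigma>. emeasure \<sigma> (T -` A \<inter> space \<sigma>) = emeasure \<sigma> A))"

end

theory Submission
  imports Defs "HOL-Library.Multiset"
begin

text \<open>Take an \<open>L\<^sup>2(\<sigma>)\<close>-orthonormal basis \<open>e\<^sub>1, \<dots>, e\<^sub>m\<close> of the forms of degree \<open>d\<close>
  restricted to the sphere, obtained by Gram--Schmidt from the monomials, so that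
  \<open>m \<le> binomial (n + d - 1) d\<close>. By Cauchy--Schwarz, every such form \<open>g\<close> satisfies
  \<open>g(x)\<^sup>2 \<le> \<parallel>g\<parallel>\<^sub>2\<^sup>2 K(x,x)\<close> with \<open>K(x,x) = \<Sum>\<^sub>i e\<^sub>i(x)\<^sup>2\<close>. Rotation invariance of \<open>\<sigma>\<close> makes
  \<open>K(x,x)\<close> constant on the sphere, and \<open>\<integral> K(x,x) d\<sigma> = m\<close>, so \<open>K(x,x) \<le> m\<close>.
  Applying this to \<open>g = f\<^sup>l\<close>, a form of degree \<open>kl\<close>, and taking \<open>2l\<close>-th roots gives the bound.\<close>

section \<open>Forms\<close>

definition monomial :: "('n::finite \<Rightarrow> nat) \<Rightarrow> real^'n \<Rightarrow> real" where
  "monomial \<alpha> x = (\<Prod>i\<in>UNIV. (x $ i) ^ \<alpha> i)"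

definition multi_indices :: "nat \<Rightarrow> ('n::finite \<Rightarrow> nat) set" where
  "multi_indices k = {\<alpha>. (\<Sum>i\<in>UNIV. \<alpha> i) = k}"

lemma finite_multi_indices: "finite (multi_indices k :: ('n::finite \<Rightarrow> nat) set)"
proof (rule finite_subset)
  show "multi_indices k \<subseteq> PiE (UNIV :: 'n set) (\<lambda>_. {..k})"
  proof
    fix \<alpha> :: "'n \<Rightarrow> nat" assume "\<alpha> \<in> multi_indices k"
    then have "\<alpha> i \<le> k" for i
      using member_le_sum[of i UNIV \<alpha>] by (simp add: multi_indices_def)
    then show "\<alpha> \<in> PiE UNIV (\<lambda>_. {..k})" by auto
  qed
qed (simp add: finite_PiE)

lemma size_eq_sum_count: "size (M :: 'a::finite multiset) = (\<Sum>x\<in>UNIV. count M x)"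
  unfolding size_multiset_overloaded_eq
  by (rule sum.mono_neutral_left) (auto simp: count_eq_zero_iff)

lemma card_multi_indices:
  "card (multi_indices k :: ('n::finite \<Rightarrow> nat) set) = (CARD('n) + k - 1) choose k"
proof -
  have "bij_betw count (multisets_of_size (UNIV :: 'n set) k) (multi_indices k)"
  proof (rule bij_betwI')
    fix \<alpha> :: "'n \<Rightarrow> nat" assume "\<alpha> \<in> multi_indices k"
    moreover have "count (Abs_multiset \<alpha>) = \<alpha>" by (simp add: count_Abs_multiset)
    ultimately show "\<exists>M\<in>multisets_of_size UNIV k. \<alpha> = count M"
      by (intro bexI[of _ "Abs_multiset \<alpha>"])
         (simp_all add: multisets_of_size_def multi_indices_def size_eq_sum_count)
  qed (simp_all add: count_inject multisets_of_size_def multi_indices_def size_eq_sum_count)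
  then have "card (multi_indices k :: ('n \<Rightarrow> nat) set) = card (multisets_of_size (UNIV :: 'n set) k)"
    by (simp add: bij_betw_same_card)
  also have "\<dots> = (CARD('n) + k - 1) choose k" by (simp add: card_multisets_of_size)
  finally show ?thesis .
qed

lemma is_form_iff:
  "is_form k f \<longleftrightarrow> (\<exists>c. f = (\<lambda>x. \<Sum>\<alpha>\<in>multi_indices k. c \<alpha> * monomial \<alpha> x))"
  unfolding is_form_def multi_indices_def monomial_def by simp

lemma is_form_add:
  assumes "is_form k f" "is_form k g"
  shows "is_form k (\<lambda>x. f x + g x)"
proof -
  obtain c c' where
    "f = (\<lambda>x. \<Sum>\<alpha>\<in>multi_indices k. c \<alpha> * monomial \<alpha> x)"
    "g = (\<lambda>x. \<Sum>\<alpha>\<in>multi_indices k. c' \<alpha> * monomial \<alpha> x)"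
    using assms is_form_iff by metis
  then show ?thesis
    unfolding is_form_iff
    by (intro exI[of _ "\<lambda>\<alpha>. c \<alpha> + c' \<alpha>"]) (simp add: sum.distrib algebra_simps)
qed

lemma is_form_cmult:
  assumes "is_form k f"
  shows "is_form k (\<lambda>x. r * f x)"
proof -
  obtain c where "f = (\<lambda>x. \<Sum>\<alpha>\<in>multi_indices k. c \<alpha> * monomial \<alpha> x)"
    using assms is_form_iff by metis
  then show ?thesis
    unfolding is_form_iff
    by (intro exI[of _ "\<lambda>\<alpha>. r * c \<alpha>"]) (simp add: sum_distrib_left algebra_simps)
qed

lemma is_form_diff: "is_form k f \<Longrightarrow> is_form k g \<Longrightarrow> is_form k (\<lambda>x. f x - g x)"
  using is_form_add[of k f "\<lambda>x. -1 * g x"] is_form_cmult[of k g "-1"] by simp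

lemma is_form_zero: "is_form k (\<lambda>x. 0)"
  unfolding is_form_iff by (rule exI[of _ "\<lambda>_. 0"]) simp

lemma is_form_sum:
  "finite I \<Longrightarrow> (\<And>i. i \<in> I \<Longrightarrow> is_form k (F i)) \<Longrightarrow> is_form k (\<lambda>x. \<Sum>i\<in>I. F i x)"
  by (induction I rule: finite_induct) (auto intro: is_form_add is_form_zero)

lemma is_form_monomial: "\<alpha> \<in> multi_indices k \<Longrightarrow> is_form k (monomial \<alpha>)"
  unfolding is_form_iff
  by (rule exI[of _ "\<lambda>\<beta>. of_bool (\<beta> = \<alpha>)"]) (simp add: finite_multi_indices)

lemma monomial_add: "monomial (\<lambda>i. \<alpha> i + \<beta> i) x = monomial \<alpha> x * monomial \<beta> x"
  unfolding monomial_def by (simp add: power_add prod.distrib)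

lemma is_form_mult:
  fixes f g :: "real^'n::finite \<Rightarrow> real"
  assumes "is_form a f" "is_form b g"
  shows "is_form (a + b) (\<lambda>x. f x * g x)"
proof -
  obtain c e where
    f: "f = (\<lambda>x. \<Sum>\<alpha>\<in>multi_indices a. c \<alpha> * monomial \<alpha> x)" and
    g: "g = (\<lambda>x. \<Sum>\<beta>\<in>multi_indices b. e \<beta> * monomial \<beta> x)"
    using assms is_form_iff by metis
  define P where "P = (multi_indices a \<times> multi_indices b :: (('n \<Rightarrow> nat) \<times> ('n \<Rightarrow> nat)) set)"
  define s where "s p = (\<lambda>i. fst p i + snd p i)" for p :: "('n \<Rightarrow> nat) \<times> ('n \<Rightarrow> nat)"
  define C where "C \<gamma> = (\<Sum>p\<in>{p \<in> P. s p = \<gamma>}. c (fst p) * e (snd p))" for \<gamma>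
  have "finite P" by (simp add: P_def finite_multi_indices)
  moreover have "s ` P \<subseteq> multi_indices (a + b)"
    by (auto simp: P_def s_def multi_indices_def sum.distrib)
  ultimately have "f x * g x = (\<Sum>\<gamma>\<in>multi_indices (a + b). C \<gamma> * monomial \<gamma> x)" for x
  proof -
    have "f x * g x = (\<Sum>p\<in>P. c (fst p) * e (snd p) * monomial (s p) x)"
      unfolding f g P_def s_def
      by (simp add: sum_product sum.cartesian_product monomial_add algebra_simps case_prod_beta)
    also have "\<dots> = (\<Sum>\<gamma>\<in>multi_indices (a + b).
        \<Sum>p\<in>{p \<in> P. s p = \<gamma>}. c (fst p) * e (snd p) * monomial (s p) x)"
      by (rule sum.group[symmetric]) (use \<open>finite P\<close> \<open>s ` P \<subseteq> _\<close> finite_multi_indices in auto)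
    also have "\<dots> = (\<Sum>\<gamma>\<in>multi_indices (a + b). C \<gamma> * monomial \<gamma> x)"
      unfolding C_def sum_distrib_right by (intro sum.cong refl) auto
    finally show ?thesis .
  qed
  then show ?thesis unfolding is_form_iff by blast
qed

lemma is_form_one: "is_form 0 (\<lambda>x::real^'n::finite. 1)"
proof -
  have "is_form 0 (monomial (\<lambda>_::'n. 0))"
    by (rule is_form_monomial) (simp add: multi_indices_def)
  moreover have "monomial (\<lambda>_. 0) = (\<lambda>x::real^'n. 1)" by (simp add: monomial_def fun_eq_iff)
  ultimately show ?thesis by simp
qed

lemma is_form_prod:
  "finite I \<Longrightarrow> (\<And>i. i \<in> I \<Longrightarrow> is_form (d i) (F i)) \<Longrightarrow>
    is_form (\<Sum>i\<in>I. d i) (\<lambda>x. \<Prod>i\<in>I. F i x)"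
  by (induction I rule: finite_induct) (auto intro: is_form_mult is_form_one)

lemma is_form_power: "is_form k f \<Longrightarrow> is_form (k * m) (\<lambda>x. f x ^ m)"
  using is_form_prod[of "{..<m}" "\<lambda>_. k" "\<lambda>_. f"] by (simp add: mult.commute)

lemma is_form_component: "is_form 1 (\<lambda>x::real^'n::finite. x $ j)"
proof -
  have "is_form 1 (monomial (\<lambda>i::'n. of_bool (i = j)))"
    by (rule is_form_monomial) (simp add: multi_indices_def)
  moreover have "monomial (\<lambda>i. of_bool (i = j)) = (\<lambda>x::real^'n. x $ j)"
    by (simp add: monomial_def fun_eq_iff of_bool_def if_distrib prod.delta cong: if_cong)
  ultimately show ?thesis by simp
qed

lemma is_form_linear_component:
  fixes T :: "real^'n::finite \<Rightarrow> real^'m::finite"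
  assumes "linear T"
  shows "is_form 1 (\<lambda>x. T x $ i)"
proof -
  have "T x = matrix T *v x" for x
    using matrix_vector_mul(2)[OF assms] by metis
  then have "T x $ i = (\<Sum>j\<in>UNIV. matrix T $ i $ j * x $ j)" for x
    by (simp add: matrix_vector_mult_def)
  moreover have "is_form 1 (\<lambda>x::real^'n. \<Sum>j\<in>UNIV. matrix T $ i $ j * x $ j)"
    by (intro is_form_sum is_form_cmult is_form_component) auto
  ultimately show ?thesis by simp
qed

lemma is_form_compose_linear:
  fixes T :: "real^'n::finite \<Rightarrow> real^'m::finite"
  assumes "is_form k h" "linear T"
  shows "is_form k (\<lambda>x. h (T x))"
proof -
  obtain c where h: "h = (\<lambda>y. \<Sum>\<alpha>\<in>multi_indices k. c \<alpha> * monomial \<alpha> y)"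
    using assms(1) is_form_iff by blast
  have "is_form k (\<lambda>x. monomial \<alpha> (T x))" if "\<alpha> \<in> multi_indices k" for \<alpha> :: "'m \<Rightarrow> nat"
    using is_form_prod[of UNIV \<alpha> "\<lambda>i x. (T x $ i) ^ \<alpha> i"]
      is_form_power[OF is_form_linear_component[OF assms(2)]] that
    by (simp add: monomial_def multi_indices_def)
  then show ?thesis
    unfolding h by (intro is_form_sum is_form_cmult) (simp_all add: finite_multi_indices)
qed

lemma continuous_on_form: "is_form k h \<Longrightarrow> continuous_on A h"
  unfolding is_form_iff monomial_def by (elim exE) (simp, intro continuous_intros)

section \<open>Rotation-invariant probability measures on the sphere\<close>

definition rotation :: "(real^'n::finite \<Rightarrow> real^'n) \<Rightarrow> bool" where
  "rotation R \<longleftrightarrow> orthogonal_transformation R \<and> det (matrix R) = 1"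

lemma rotation_linear: "rotation R \<Longrightarrow> linear R"
  by (simp add: rotation_def orthogonal_transformation_linear)

lemma continuous_on_rotation: "rotation R \<Longrightarrow> continuous_on A R"
  by (intro linear_continuous_on linear_conv_bounded_linear[THEN iffD1] rotation_linear)

lemma rotation_sphere: "rotation R \<Longrightarrow> x \<in> sphere 0 1 \<Longrightarrow> R x \<in> sphere 0 1"
  by (simp add: rotation_def orthogonal_transformation_norm)

lemma rotation_exists_sphere:
  fixes x y :: "real^'n::finite"
  assumes "CARD('n) \<ge> 2" "x \<in> sphere 0 1" "y \<in> sphere 0 1"
  obtains R where "rotation R" "R x = y"
  using rotation_exists[OF assms(1), of x y] assms(2,3) by (auto simp: rotation_def)

locale rot_inv_sphere =
  fixes \<sigma> :: "(real^'n::finite) measure"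
  assumes rot_inv_sphere_prob: "rot_inv_sphere_prob \<sigma>"
begin

abbreviation S :: "(real^'n) set" where "S \<equiv> sphere 0 1"

sublocale prob_space \<sigma>
  using rot_inv_sphere_prob by (simp add: rot_inv_sphere_prob_def)

lemma space_eq: "space \<sigma> = S"
  and sets_eq: "sets \<sigma> = sets (restrict_space borel S)"
  and emeasure_rotation_vimage:
    "rotation R \<Longrightarrow> A \<in> sets \<sigma> \<Longrightarrow> emeasure \<sigma> (R -` A \<inter> space \<sigma>) = emeasure \<sigma> A"
  using rot_inv_sphere_prob by (auto simp: rot_inv_sphere_prob_def rotation_def)

lemma borel_measurable_continuous: "continuous_on S h \<Longrightarrow> h \<in> borel_measurable \<sigma>"
  using measurable_cong_sets[OF sets_eq refl] borel_measurable_continuous_on_restrict by blast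

lemma integrable_continuous:
  fixes h :: "real^'n \<Rightarrow> real"
  assumes "continuous_on S h"
  shows "integrable \<sigma> h"
proof -
  have "compact (h ` S)" by (rule compact_continuous_image[OF assms]) simp
  then obtain B where "\<forall>y\<in>h ` S. norm y \<le> B" using compact_imp_bounded bounded_iff by metis
  then show ?thesis
    using integrable_const_bound[of h B] borel_measurable_continuous[OF assms] space_eq by auto
qed

lemma measurable_rotation:
  assumes "rotation R"
  shows "R \<in> \<sigma> \<rightarrow>\<^sub>M \<sigma>"
proof -
  have "R \<in> restrict_space borel S \<rightarrow>\<^sub>M restrict_space borel S"
    by (rule measurable_restrict_space3[OF borel_measurable_continuous_onI])
       (use assms continuous_on_rotation rotation_sphere in auto)
  then show ?thesis by (simp add: measurable_cong_sets[OF sets_eq sets_eq])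
qed

lemma distr_rotation:
  assumes "rotation R"
  shows "distr \<sigma> \<sigma> R = \<sigma>"
proof (rule measure_eqI)
  fix A assume "A \<in> sets (distr \<sigma> \<sigma> R)"
  then show "emeasure (distr \<sigma> \<sigma> R) A = emeasure \<sigma> A"
    using emeasure_distr[OF measurable_rotation[OF assms]] emeasure_rotation_vimage[OF assms]
    by simp
qed simp

lemma integral_rotation:
  fixes h :: "real^'n \<Rightarrow> real"
  assumes "rotation R" "continuous_on S h"
  shows "(\<integral>x. h (R x) \<partial>\<sigma>) = (\<integral>x. h x \<partial>\<sigma>)"
  using integral_distr[OF measurable_rotation[OF assms(1)] borel_measurable_continuous[OF assms(2)]]
  by (simp add: distr_rotation[OF assms(1)])

text \<open>Finitely many rotated copies of a small cap cover the sphere, so a null cap would make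
  the whole sphere null.\<close>
lemma emeasure_cap_pos:
  assumes "CARD('n) \<ge> 2" "y \<in> S" "\<epsilon> > 0"
  shows "emeasure \<sigma> (ball y \<epsilon> \<inter> S) \<noteq> 0"
proof
  define B where "B = ball y \<epsilon> \<inter> S"
  assume "emeasure \<sigma> (ball y \<epsilon> \<inter> S) = 0"
  then have B_null: "emeasure \<sigma> B = 0" by (simp add: B_def)
  have B_sets: "B \<in> sets \<sigma>" by (auto simp: sets_eq sets_restrict_space B_def)
  have "\<forall>z\<in>S. \<exists>R. rotation R \<and> R z = y"
    using rotation_exists_sphere[OF assms(1) _ assms(2)] by metis
  then obtain Rot where Rot: "\<And>z. z \<in> S \<Longrightarrow> rotation (Rot z) \<and> Rot z z = y"
    by metis
  have "open (Rot z -` ball y \<epsilon>)" if "z \<in> S" for z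
    using continuous_on_rotation[of "Rot z" UNIV] Rot[OF that] by (intro open_vimage) auto
  moreover have "S \<subseteq> (\<Union>z\<in>S. Rot z -` ball y \<epsilon>)" using Rot assms(3) by auto
  ultimately obtain D where D: "D \<subseteq> S" "finite D" "S \<subseteq> (\<Union>z\<in>D. Rot z -` ball y \<epsilon>)"
    by (rule compactE_image[OF compact_sphere]) blast
  have D_sets: "Rot z -` B \<inter> space \<sigma> \<in> sets \<sigma>" if "z \<in> D" for z
    using measurable_sets[OF measurable_rotation B_sets] Rot that D(1) by blast
  have cover: "S \<subseteq> (\<Union>z\<in>D. Rot z -` B \<inter> space \<sigma>)"
  proof
    fix x assume "x \<in> S"
    then obtain z where "z \<in> D" "Rot z x \<in> ball y \<epsilon>" using D(3) by blast
    moreover have "Rot z x \<in> S" using Rot \<open>z \<in> D\<close> \<open>x \<in> S\<close> D(1) rotation_sphere by blast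
    ultimately show "x \<in> (\<Union>z\<in>D. Rot z -` B \<inter> space \<sigma>)"
      using \<open>x \<in> S\<close> by (auto simp: B_def space_eq)
  qed
  have "emeasure \<sigma> S \<le> emeasure \<sigma> (\<Union>z\<in>D. Rot z -` B \<inter> space \<sigma>)"
    by (rule emeasure_mono[OF cover]) (intro sets.finite_UN D(2) D_sets)
  also have "\<dots> \<le> (\<Sum>z\<in>D. emeasure \<sigma> (Rot z -` B \<inter> space \<sigma>))"
    using D_sets D(2) by (intro emeasure_subadditive_finite) auto
  also have "\<dots> = (\<Sum>z\<in>D. emeasure \<sigma> B)"
    by (intro sum.cong refl emeasure_rotation_vimage B_sets) (use Rot D(1) in auto)
  finally have "emeasure \<sigma> S = 0" using B_null by simp
  then show False using emeasure_space_1 by (simp add: space_eq)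
qed

lemma continuous_vanishes_if_integral_square_eq_0:
  fixes h :: "real^'n \<Rightarrow> real"
  assumes "CARD('n) \<ge> 2" "continuous_on S h" "(\<integral>x. (h x)\<^sup>2 \<partial>\<sigma>) = 0" "x \<in> S"
  shows "h x = 0"
proof (rule ccontr)
  assume "h x \<noteq> 0"
  have "AE z in \<sigma>. (h z)\<^sup>2 = 0"
    using integral_nonneg_eq_0_iff_AE[OF integrable_continuous] assms(2,3)
    by (simp add: continuous_intros)
  then obtain N where N: "{z \<in> space \<sigma>. h z \<noteq> 0} \<subseteq> N" "emeasure \<sigma> N = 0" "N \<in> sets \<sigma>"
    by (auto elim: AE_E)
  obtain \<epsilon> where "\<epsilon> > 0" and \<epsilon>: "\<forall>z\<in>S. dist z x < \<epsilon> \<longrightarrow> dist (h z) (h x) < \<bar>h x\<bar>"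
    using assms(2,4) \<open>h x \<noteq> 0\<close> unfolding continuous_on_iff by (metis zero_less_abs_iff)
  have "ball x \<epsilon> \<inter> S \<subseteq> N"
  proof
    fix z assume z: "z \<in> ball x \<epsilon> \<inter> S"
    then have "h z \<noteq> 0" using \<epsilon> by (auto simp: dist_commute dist_real_def)
    then show "z \<in> N" using N(1) z by (auto simp: space_eq)
  qed
  then have "emeasure \<sigma> (ball x \<epsilon> \<inter> S) = 0" using N(2,3) by (metis emeasure_eq_0)
  then show False using emeasure_cap_pos[OF assms(1,4) \<open>\<epsilon> > 0\<close>] by simp
qed

end

section \<open>Orthonormal families of forms in \<open>L\<^sup>2(\<sigma>)\<close>\<close>

context rot_inv_sphere
begin

definition l2_inner :: "(real^'n \<Rightarrow> real) \<Rightarrow> (real^'n \<Rightarrow> real) \<Rightarrow> real" where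
  "l2_inner f g = (\<integral>x. f x * g x \<partial>\<sigma>)"

lemma l2_inner_commute: "l2_inner f g = l2_inner g f"
  by (simp add: l2_inner_def mult.commute)

lemma l2_inner_cmult_left: "l2_inner (\<lambda>x. r * f x) g = r * l2_inner f g"
  by (simp add: l2_inner_def mult.assoc)

lemma l2_inner_cong_left: "(\<And>x. x \<in> S \<Longrightarrow> f x = f' x) \<Longrightarrow> l2_inner f g = l2_inner f' g"
  unfolding l2_inner_def by (rule Bochner_Integration.integral_cong) (auto simp: space_eq)

lemma l2_inner_self_nonneg: "l2_inner f f \<ge> 0"
  unfolding l2_inner_def by (rule integral_nonneg_AE) simp

lemma l2_inner_sum_left:
  assumes "finite I" "\<And>i. i \<in> I \<Longrightarrow> continuous_on S (f i)" "continuous_on S g"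
  shows "l2_inner (\<lambda>x. \<Sum>i\<in>I. a i * f i x) g = (\<Sum>i\<in>I. a i * l2_inner (f i) g)"
proof -
  have "l2_inner (\<lambda>x. \<Sum>i\<in>I. a i * f i x) g = (\<integral>x. (\<Sum>i\<in>I. a i * (f i x * g x)) \<partial>\<sigma>)"
    by (simp add: l2_inner_def sum_distrib_right mult.assoc)
  also have "\<dots> = (\<Sum>i\<in>I. (\<integral>x. a i * (f i x * g x) \<partial>\<sigma>))"
    by (rule Bochner_Integration.integral_sum) (intro integrable_continuous continuous_intros assms; simp)
  also have "\<dots> = (\<Sum>i\<in>I. a i * l2_inner (f i) g)" by (simp add: l2_inner_def)
  finally show ?thesis .
qed

lemma l2_inner_diff_left:
  assumes "continuous_on S f" "continuous_on S f'" "continuous_on S g"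
  shows "l2_inner (\<lambda>x. f x - f' x) g = l2_inner f g - l2_inner f' g"
  unfolding l2_inner_def left_diff_distrib
  by (rule Bochner_Integration.integral_diff) (intro integrable_continuous continuous_intros assms)+

definition orthonormal_forms :: "nat \<Rightarrow> nat \<Rightarrow> (nat \<Rightarrow> real^'n \<Rightarrow> real) \<Rightarrow> bool" where
  "orthonormal_forms d m e \<longleftrightarrow> (\<forall>i<m. is_form d (e i)) \<and>
     (\<forall>i<m. \<forall>j<m. l2_inner (e i) (e j) = of_bool (i = j))"

definition spanned_on_sphere :: "nat \<Rightarrow> (nat \<Rightarrow> real^'n \<Rightarrow> real) \<Rightarrow> (real^'n \<Rightarrow> real) \<Rightarrow> bool" where
  "spanned_on_sphere m e h \<longleftrightarrow> (\<exists>a. \<forall>x\<in>S. h x = (\<Sum>i<m. a i * e i x))"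

lemma orthonormal_forms_continuous: "orthonormal_forms d m e \<Longrightarrow> i < m \<Longrightarrow> continuous_on S (e i)"
  unfolding orthonormal_forms_def by (blast intro: continuous_on_form)

lemma l2_inner_expansion_left:
  assumes "orthonormal_forms d m e" "j < m"
  shows "l2_inner (\<lambda>x. \<Sum>i<m. a i * e i x) (e j) = a j"
proof -
  have "l2_inner (\<lambda>x. \<Sum>i<m. a i * e i x) (e j) = (\<Sum>i<m. a i * l2_inner (e i) (e j))"
    using assms by (intro l2_inner_sum_left) (auto simp: orthonormal_forms_continuous)
  also have "\<dots> = a j" using assms by (simp add: orthonormal_forms_def)
  finally show ?thesis .
qed

lemma l2_inner_self_expansion:
  assumes "orthonormal_forms d m e" "\<forall>x\<in>S. h x = (\<Sum>i<m. a i * e i x)"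
  shows "l2_inner h h = (\<Sum>i<m. (a i)\<^sup>2)"
proof -
  let ?h = "\<lambda>x. \<Sum>i<m. a i * e i x"
  have cont: "continuous_on S ?h"
    using assms(1) by (intro continuous_intros) (auto simp: orthonormal_forms_continuous)
  have "l2_inner h h = l2_inner ?h h"
    by (rule l2_inner_cong_left) (use assms(2) in simp)
  also have "\<dots> = l2_inner h ?h" by (rule l2_inner_commute)
  also have "\<dots> = l2_inner ?h ?h"
    by (rule l2_inner_cong_left) (use assms(2) in simp)
  also have "\<dots> = (\<Sum>i<m. a i * l2_inner (e i) ?h)"
    using assms(1) cont by (intro l2_inner_sum_left) (auto simp: orthonormal_forms_continuous)
  also have "\<dots> = (\<Sum>i<m. (a i)\<^sup>2)"
  proof (intro sum.cong refl)
    fix i assume "i \<in> {..<m}"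
    then have "l2_inner (e i) ?h = a i"
      by (subst l2_inner_commute) (simp add: l2_inner_expansion_left[OF assms(1)])
    then show "a i * l2_inner (e i) ?h = (a i)\<^sup>2" by (simp add: power2_eq_square)
  qed
  finally show ?thesis .
qed

lemma gram_schmidt_residual:
  assumes "orthonormal_forms d m e" "is_form d u"
  defines "w \<equiv> \<lambda>x. u x - (\<Sum>i<m. l2_inner u (e i) * e i x)"
  shows "is_form d w" and "j < m \<Longrightarrow> l2_inner w (e j) = 0"
proof -
  have "is_form d (\<lambda>x. \<Sum>i<m. l2_inner u (e i) * e i x)"
    using assms(1) by (intro is_form_sum is_form_cmult) (auto simp: orthonormal_forms_def)
  then show "is_form d w" unfolding w_def by (rule is_form_diff[OF assms(2)])
  assume "j < m"
  have "l2_inner w (e j) = l2_inner u (e j) - l2_inner (\<lambda>x. \<Sum>i<m. l2_inner u (e i) * e i x) (e j)"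
    using assms(1,2) \<open>j < m\<close> unfolding w_def
    by (intro l2_inner_diff_left)
       (auto simp: orthonormal_forms_continuous continuous_on_form intro!: continuous_intros)
  then show "l2_inner w (e j) = 0"
    using l2_inner_expansion_left[OF assms(1) \<open>j < m\<close>, of "\<lambda>i. l2_inner u (e i)"] by simp
qed

lemma orthonormal_forms_extend:
  assumes "orthonormal_forms d m e" "is_form d w" "\<And>j. j < m \<Longrightarrow> l2_inner w (e j) = 0"
    "l2_inner w w > 0"
  shows "orthonormal_forms d (Suc m) (e(m := (\<lambda>x. w x / sqrt (l2_inner w w))))"
proof -
  define r where "r = sqrt (l2_inner w w)"
  have r: "r > 0" "r * r = l2_inner w w" using assms(4) by (simp_all add: r_def)
  have w_div: "(\<lambda>x. w x / r) = (\<lambda>x. (1 / r) * w x)" by simp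
  have "is_form d (\<lambda>x. w x / r)" unfolding w_div by (rule is_form_cmult[OF assms(2)])
  moreover have "l2_inner (\<lambda>x. w x / r) (e j) = 0" if "j < m" for j
    unfolding w_div l2_inner_cmult_left using assms(3)[OF that] by simp
  moreover have "l2_inner (\<lambda>x. w x / r) (\<lambda>x. w x / r) = 1"
  proof -
    have "l2_inner (\<lambda>x. (1 / r) * w x) (\<lambda>x. (1 / r) * w x)
        = (1 / r) * l2_inner (\<lambda>x. (1 / r) * w x) w"
      by (subst l2_inner_commute) (rule l2_inner_cmult_left)
    also have "\<dots> = (1 / r) * (1 / r) * l2_inner w w" by (simp only: l2_inner_cmult_left mult.assoc)
    finally show ?thesis unfolding w_div using r assms(4) by simp
  qed
  ultimately show ?thesis
    using assms(1) l2_inner_commute[of "e _" "\<lambda>x. w x / r"]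
    unfolding orthonormal_forms_def r_def[symmetric]
    by (auto simp: less_Suc_eq)
qed

lemma spanned_on_sphere_extend:
  "spanned_on_sphere m e h \<Longrightarrow> spanned_on_sphere (Suc m) (e(m := w)) h"
proof -
  assume "spanned_on_sphere m e h"
  then obtain a where "\<forall>x\<in>S. h x = (\<Sum>i<m. a i * e i x)" by (auto simp: spanned_on_sphere_def)
  then have "\<forall>x\<in>S. h x = (\<Sum>i<Suc m. (a(m := 0)) i * (e(m := w)) i x)" by simp
  then show ?thesis unfolding spanned_on_sphere_def by blast
qed

lemma spanned_on_sphere_sum:
  assumes "finite I" "\<And>\<alpha>. \<alpha> \<in> I \<Longrightarrow> spanned_on_sphere m e (u \<alpha>)"
  shows "spanned_on_sphere m e (\<lambda>x. \<Sum>\<alpha>\<in>I. c \<alpha> * u \<alpha> x)"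
proof -
  have "\<forall>\<alpha>\<in>I. \<exists>a. \<forall>x\<in>S. u \<alpha> x = (\<Sum>i<m. a i * e i x)"
    using assms(2) by (simp add: spanned_on_sphere_def)
  then have "\<exists>a. \<forall>\<alpha>\<in>I. \<forall>x\<in>S. u \<alpha> x = (\<Sum>i<m. a \<alpha> i * e i x)"
    by (rule bchoice)
  then obtain a where a: "\<forall>\<alpha>\<in>I. \<forall>x\<in>S. u \<alpha> x = (\<Sum>i<m. a \<alpha> i * e i x)"
    by blast
  define b where "b i = (\<Sum>\<alpha>\<in>I. c \<alpha> * a \<alpha> i)" for i
  have "(\<Sum>\<alpha>\<in>I. c \<alpha> * u \<alpha> x) = (\<Sum>i<m. b i * e i x)" if "x \<in> S" for x
  proof -
    have "(\<Sum>\<alpha>\<in>I. c \<alpha> * u \<alpha> x) = (\<Sum>\<alpha>\<in>I. \<Sum>i<m. c \<alpha> * (a \<alpha> i * e i x))"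
      using a that by (simp add: sum_distrib_left)
    also have "\<dots> = (\<Sum>i<m. \<Sum>\<alpha>\<in>I. c \<alpha> * (a \<alpha> i * e i x))"
      by (rule sum.swap)
    also have "\<dots> = (\<Sum>i<m. b i * e i x)"
      by (simp add: b_def sum_distrib_right mult.assoc)
    finally show ?thesis .
  qed
  then show ?thesis unfolding spanned_on_sphere_def by blast
qed

lemma gram_schmidt_forms:
  assumes "CARD('n) \<ge> 2" "finite A" "\<And>\<alpha>. \<alpha> \<in> A \<Longrightarrow> is_form d (u \<alpha>)"
  shows "\<exists>m e. m \<le> card A \<and> orthonormal_forms d m e \<and> (\<forall>\<alpha>\<in>A. spanned_on_sphere m e (u \<alpha>))"
  using assms(2,3)
proof (induction A rule: finite_induct)
  case empty
  show ?case by (auto simp: orthonormal_forms_def)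
next
  case (insert \<alpha> A)
  then obtain m e where m: "m \<le> card A" and e: "orthonormal_forms d m e"
    and span: "\<forall>\<beta>\<in>A. spanned_on_sphere m e (u \<beta>)" by auto
  define c where "c i = l2_inner (u \<alpha>) (e i)" for i
  define w where "w = (\<lambda>x. u \<alpha> x - (\<Sum>i<m. c i * e i x))"
  have w_form: "is_form d w" and w_orth: "\<And>j. j < m \<Longrightarrow> l2_inner w (e j) = 0"
    using gram_schmidt_residual[OF e insert.prems[OF insertI1]] by (simp_all add: w_def c_def)
  have u_eq: "u \<alpha> x = (\<Sum>i<m. c i * e i x) + w x" for x
    by (simp add: w_def)
  have card: "m < card (insert \<alpha> A)" using m insert.hyps by simp
  show ?case
  proof (cases "l2_inner w w = 0")
    case True
    then have "w x = 0" if "x \<in> S" for x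
      using continuous_vanishes_if_integral_square_eq_0[OF assms(1) continuous_on_form[OF w_form] _ that]
      by (simp add: l2_inner_def power2_eq_square)
    then have "\<forall>x\<in>S. u \<alpha> x = (\<Sum>i<m. c i * e i x)" by (simp add: u_eq)
    then have "spanned_on_sphere m e (u \<alpha>)" unfolding spanned_on_sphere_def by blast
    with span have "\<forall>\<beta>\<in>insert \<alpha> A. spanned_on_sphere m e (u \<beta>)" by simp
    with card e show ?thesis by (intro exI[of _ m] exI[of _ e] conjI) simp_all
  next
    case False
    define r where "r = sqrt (l2_inner w w)"
    define e' where "e' = e(m := (\<lambda>x. w x / r))"
    have "r > 0" using False l2_inner_self_nonneg[of w] by (simp add: r_def)
    have e': "orthonormal_forms d (Suc m) e'"
      unfolding e'_def r_def using False l2_inner_self_nonneg[of w]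
      by (intro orthonormal_forms_extend e w_form w_orth) auto
    have "u \<alpha> x = (\<Sum>i<Suc m. (c(m := r)) i * e' i x)" for x
      using \<open>r > 0\<close> by (simp add: u_eq e'_def)
    then have "spanned_on_sphere (Suc m) e' (u \<alpha>)" unfolding spanned_on_sphere_def by blast
    moreover have "\<forall>\<beta>\<in>A. spanned_on_sphere (Suc m) e' (u \<beta>)"
      unfolding e'_def using span by (simp add: spanned_on_sphere_extend)
    ultimately have "\<forall>\<beta>\<in>insert \<alpha> A. spanned_on_sphere (Suc m) e' (u \<beta>)" by simp
    with card e' show ?thesis by (intro exI[of _ "Suc m"] exI[of _ e'] conjI) simp_all
  qed
qed

lemma orthonormal_basis_of_forms:
  assumes "CARD('n) \<ge> 2"
  obtains m e where "m \<le> card (multi_indices d :: ('n \<Rightarrow> nat) set)" "orthonormal_forms d m e"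
    "\<And>h. is_form d h \<Longrightarrow> spanned_on_sphere m e h"
proof -
  obtain m e where m: "m \<le> card (multi_indices d :: ('n \<Rightarrow> nat) set)"
    and e: "orthonormal_forms d m e"
    and monomials: "\<forall>\<alpha>\<in>multi_indices d. spanned_on_sphere m e (monomial \<alpha>)"
    using gram_schmidt_forms[OF assms finite_multi_indices[of d], where u = monomial] is_form_monomial by blast
  have "spanned_on_sphere m e h" if "is_form d h" for h
  proof -
    obtain c where h: "h = (\<lambda>x. \<Sum>\<alpha>\<in>multi_indices d. c \<alpha> * monomial \<alpha> x)"
      using \<open>is_form d h\<close> is_form_iff by blast
    show ?thesis
      unfolding h using monomials by (intro spanned_on_sphere_sum finite_multi_indices) simp
  qed
  then show ?thesis by (rule that[OF m e])
qed

end

section \<open>The reproducing kernel\<close>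

locale orthonormal_form_basis = rot_inv_sphere \<sigma> for \<sigma> :: "(real^'n::finite) measure" +
  fixes d m :: nat and e :: "nat \<Rightarrow> real^'n \<Rightarrow> real"
  assumes orthonormal: "orthonormal_forms d m e"
    and spanning: "\<And>h. is_form d h \<Longrightarrow> spanned_on_sphere m e h"
begin

definition reproducing_kernel :: "real^'n \<Rightarrow> real^'n \<Rightarrow> real" where
  "reproducing_kernel x y = (\<Sum>i<m. e i x * e i y)"

lemma is_form_reproducing_kernel: "is_form d (reproducing_kernel x)"
  using orthonormal unfolding reproducing_kernel_def[abs_def] orthonormal_forms_def
  by (intro is_form_sum is_form_cmult) auto

lemma reproducing_kernel_diag_nonneg: "reproducing_kernel x x \<ge> 0"
  by (simp add: reproducing_kernel_def sum_nonneg)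

lemma l2_inner_reproducing_kernel:
  "l2_inner (reproducing_kernel x) (reproducing_kernel x) = reproducing_kernel x x"
  using l2_inner_self_expansion[OF orthonormal, of "reproducing_kernel x" "\<lambda>i. e i x"]
  by (simp add: reproducing_kernel_def power2_eq_square)

lemma form_square_le_l2_times_kernel:
  assumes "is_form d h" "x \<in> S"
  shows "(h x)\<^sup>2 \<le> l2_inner h h * reproducing_kernel x x"
proof -
  obtain a where a: "\<forall>y\<in>S. h y = (\<Sum>i<m. a i * e i y)"
    using spanning[OF assms(1)] by (auto simp: spanned_on_sphere_def)
  then have "(h x)\<^sup>2 = (\<Sum>i<m. a i * e i x)\<^sup>2" using assms(2) by simp
  also have "\<dots> \<le> (\<Sum>i<m. (a i)\<^sup>2) * (\<Sum>i<m. (e i x)\<^sup>2)"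
    by (rule Cauchy_Schwarz_ineq_sum)
  also have "\<dots> = l2_inner h h * reproducing_kernel x x"
    by (simp add: l2_inner_self_expansion[OF orthonormal a] reproducing_kernel_def power2_eq_square)
  finally show ?thesis .
qed

text \<open>Pull the kernel at \<open>x\<close> back by a rotation taking \<open>y\<close> to \<open>x\<close>: it keeps its \<open>L\<^sup>2\<close> norm
  and takes the value \<open>K(x,x)\<close> at \<open>y\<close>, so the previous lemma at \<open>y\<close> gives \<open>K(x,x)\<^sup>2 \<le> K(x,x) K(y,y)\<close>.\<close>
lemma reproducing_kernel_diag_le:
  assumes "CARD('n) \<ge> 2" "x \<in> S" "y \<in> S"
  shows "reproducing_kernel x x \<le> reproducing_kernel y y"
proof -
  obtain R where R: "rotation R" "R y = x" using rotation_exists_sphere[OF assms(1,3,2)] .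
  define h where "h z = reproducing_kernel x (R z)" for z
  have h_form: "is_form d h"
    unfolding h_def by (rule is_form_compose_linear[OF is_form_reproducing_kernel rotation_linear[OF R(1)]])
  have "l2_inner h h = l2_inner (reproducing_kernel x) (reproducing_kernel x)"
    unfolding l2_inner_def h_def
    by (rule integral_rotation[OF R(1)])
       (intro continuous_intros continuous_on_form[OF is_form_reproducing_kernel])
  then have "(reproducing_kernel x x)\<^sup>2 \<le> reproducing_kernel x x * reproducing_kernel y y"
    using form_square_le_l2_times_kernel[OF h_form assms(3)] R(2)
    by (simp add: h_def l2_inner_reproducing_kernel)
  then show ?thesis
    using reproducing_kernel_diag_nonneg[of x] reproducing_kernel_diag_nonneg[of y]
    by (cases "reproducing_kernel x x = 0") (auto simp: power2_eq_square)
qed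

lemma integral_reproducing_kernel_diag: "(\<integral>x. reproducing_kernel x x \<partial>\<sigma>) = m"
proof -
  have "(\<integral>x. reproducing_kernel x x \<partial>\<sigma>) = (\<Sum>i<m. l2_inner (e i) (e i))"
    unfolding reproducing_kernel_def l2_inner_def
    by (rule Bochner_Integration.integral_sum)
       (intro integrable_continuous continuous_intros orthonormal_forms_continuous[OF orthonormal]; simp)
  also have "\<dots> = m" using orthonormal by (simp add: orthonormal_forms_def)
  finally show ?thesis .
qed

lemma reproducing_kernel_diag_le_dim:
  assumes "CARD('n) \<ge> 2" "x \<in> S"
  shows "reproducing_kernel x x \<le> m"
proof -
  have "(\<integral>y. reproducing_kernel x x \<partial>\<sigma>) \<le> (\<integral>y. reproducing_kernel y y \<partial>\<sigma>)"
    using reproducing_kernel_diag_le[OF assms] is_form_reproducing_kernel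
    by (intro integral_mono integrable_continuous)
       (auto simp: space_eq reproducing_kernel_def
         intro!: continuous_intros orthonormal_forms_continuous[OF orthonormal])
  then show ?thesis by (simp add: integral_reproducing_kernel_diag prob_space)
qed

end

context rot_inv_sphere
begin

lemma form_square_le_card_multi_indices:
  assumes "CARD('n) \<ge> 2" "is_form d g" "x \<in> S"
  shows "(g x)\<^sup>2 \<le> card (multi_indices d :: ('n \<Rightarrow> nat) set) * l2_inner g g"
proof -
  obtain m e where m: "m \<le> card (multi_indices d :: ('n \<Rightarrow> nat) set)"
    and orth: "orthonormal_forms d m e" and span: "\<And>h. is_form d h \<Longrightarrow> spanned_on_sphere m e h"
    using orthonormal_basis_of_forms[OF assms(1)] by blast
  interpret orthonormal_form_basis \<sigma> d m e by unfold_locales (use orth span in auto)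
  have "(g x)\<^sup>2 \<le> l2_inner g g * reproducing_kernel x x"
    by (rule form_square_le_l2_times_kernel[OF assms(2,3)])
  also have "\<dots> \<le> l2_inner g g * m"
    by (rule mult_left_mono[OF reproducing_kernel_diag_le_dim[OF assms(1,3)] l2_inner_self_nonneg])
  also have "\<dots> \<le> l2_inner g g * card (multi_indices d :: ('n \<Rightarrow> nat) set)"
    using m l2_inner_self_nonneg[of g] by (intro mult_left_mono) auto
  finally show ?thesis by (simp add: mult.commute)
qed

end

lemma abs_le_powr_inverse_of_power_le:
  fixes a B :: real
  assumes "p > 0" "\<bar>a\<bar> ^ p \<le> B"
  shows "\<bar>a\<bar> \<le> B powr (1 / p)"
proof -
  have "\<bar>a\<bar> = (\<bar>a\<bar> ^ p) powr (1 / p)"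
    using assms(1) by (simp add: powr_inverse_root real_root_power_cancel)
  also have "\<dots> \<le> B powr (1 / p)" using assms by (intro powr_mono2) auto
  finally show ?thesis .
qed

theorem corollary6p7:
  fixes f :: "real^'n \<Rightarrow> real" and \<sigma> :: "(real^'n) measure" and k l :: nat
  assumes "CARD('n) \<ge> 2" and "k \<ge> 1" and "l \<ge> 1"
    and "is_form k f" and "rot_inv_sphere_prob \<sigma>"
  shows "(SUP x\<in>sphere 0 1. \<bar>f x\<bar>)
    \<le> (real ((CARD('n) + k * l - 1) choose (k * l))) powr (1 / (2 * real l))
       * (\<integral>x. \<bar>f x\<bar> ^ (2 * l) \<partial>\<sigma>) powr (1 / (2 * real l))"
proof -
  interpret rot_inv_sphere \<sigma> by (rule rot_inv_sphere.intro) fact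
  define N where "N = real ((CARD('n) + k * l - 1) choose (k * l))"
  define I where "I = (\<integral>x. \<bar>f x\<bar> ^ (2 * l) \<partial>\<sigma>)"
  have f_pow: "(f x ^ l)\<^sup>2 = \<bar>f x\<bar> ^ (2 * l)" for x
    by (simp add: power_mult[symmetric] mult.commute power_even_abs)
  have "\<bar>f x\<bar> \<le> N powr (1 / (2 * real l)) * I powr (1 / (2 * real l))" if "x \<in> S" for x
  proof -
    have "\<bar>f x\<bar> ^ (2 * l) \<le> N * I"
      using form_square_le_card_multi_indices[OF assms(1) is_form_power[OF assms(4), of l] that]
      by (simp add: f_pow l2_inner_def power2_eq_square[symmetric] card_multi_indices N_def I_def)
    then have "\<bar>f x\<bar> \<le> (N * I) powr (1 / (2 * real l))"
      using abs_le_powr_inverse_of_power_le[of "2 * l"] assms(3) by simp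
    then show ?thesis by (simp add: N_def I_def powr_mult)
  qed
  then have "(SUP x\<in>S. \<bar>f x\<bar>) \<le> N powr (1 / (2 * real l)) * I powr (1 / (2 * real l))"
    by (intro cSUP_least) auto
  then show ?thesis by (simp add: N_def I_def)
qed

end
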